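(* Let $p_k\ge0$ ($k\ge1$) with $\sum_k p_k=1$ and $Q_1=\sum_k kp_k<\infty$, let $Q(z)=\sum_k p_kz^k$, and for $q\in(0,1)$ define $\kappa(q)>0$ by $$-\log\kappa(q)=\int_0^{1-q}\Big(\frac{Q_1}{1-Q(z)}-\frac{1}{1-z}\Big)\,dz.$$ Then $\kappa(q)\to0$ as $q\to0$ if and only if $\sum_{k=1}^\infty p_k\,k\log k=\infty$. *)

theory Defs
  imports "HOL-Analysis.Analysis"
begin

definition pgf :: "(nat \<Rightarrow> real) \<Rightarrow> real \<Rightarrow> real" where
  "pgf p z = (\<Sum>k. p k * z ^ k)"

definition mean1 :: "(nat \<Rightarrow> real) \<Rightarrow> real" where
  "mean1 p = (\<Sum>k. real k * p k)"

definition kappa :: "(nat \<Rightarrow> real) \<Rightarrow> real \<Rightarrow> real" where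
  "kappa p q = exp (- integral {0..1 - q}
      (\<lambda>z. mean1 p / (1 - pgf p z) - 1 / (1 - z)))"

end

theory Submission imports Defs begin

text \<open>Write \<open>1 - Q(z) = (1 - z) g(z)\<close>; since \<open>p\<^sub>0 = 0\<close>, \<open>1 \<le> g \<le> Q\<^sub>1\<close> on \<open>[0,1)\<close>. With
  \<open>h(z) = (Q\<^sub>1 - g(z)) / (1 - z)\<close> the integrand defining \<open>-log \<kappa>(q)\<close> equals \<open>h/g\<close>, so it lies
  between \<open>h/Q\<^sub>1\<close> and \<open>h\<close>. Now \<open>h = \<Sum>\<^sub>k p\<^sub>k c\<^sub>k\<close> with polynomials \<open>c\<^sub>k\<close> having nonnegative
  coefficients, so by monotone convergence \<open>\<integral>\<^sub>0\<^sup>1\<^sup>-\<^sup>q h = \<Sum>\<^sub>k p\<^sub>k D\<^sub>k(1 - q)\<close>, where \<open>D\<^sub>k\<close> is the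
  primitive of \<open>c\<^sub>k\<close> vanishing at 0; this increases to \<open>\<Sum>\<^sub>k p\<^sub>k D\<^sub>k(1) = \<Sum>\<^sub>k p\<^sub>k k (H\<^sub>k - 1)\<close>
  as \<open>q \<rightarrow> 0\<close>. Since \<open>k (H\<^sub>k - 1)\<close> differs from \<open>k log k\<close> by at most \<open>k\<close> and \<open>Q\<^sub>1 < \<infinity>\<close>,
  \<open>-log \<kappa>(q)\<close> is unbounded exactly when \<open>\<Sum>\<^sub>k p\<^sub>k k log k\<close> diverges.\<close>

text \<open>\<open>geom_defect k\<close> is \<open>c\<^sub>k(z) = (k - (1 + z + \<dots> + z\<^sup>k\<^sup>-\<^sup>1)) / (1 - z)\<close> and
  \<open>geom_defect_primitive k\<close> is \<open>D\<^sub>k\<close>.\<close>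

definition geom_defect :: "nat \<Rightarrow> real \<Rightarrow> real" where
  "geom_defect k z = (\<Sum>j<k. \<Sum>i<j. z ^ i)"

definition geom_defect_primitive :: "nat \<Rightarrow> real \<Rightarrow> real" where
  "geom_defect_primitive k x = (\<Sum>j<k. \<Sum>i<j. x ^ Suc i / real (Suc i))"

lemma geom_defect_nonneg: "0 \<le> z \<Longrightarrow> 0 \<le> geom_defect k z"
  unfolding geom_defect_def by (intro sum_nonneg) auto

lemma geom_defect_eq: "(1 - z) * geom_defect k z = real k - (\<Sum>j<k. z ^ j)"
proof -
  have "real k - (\<Sum>j<k. z ^ j) = (\<Sum>j<k. 1 - z ^ j)"
    by (simp add: sum_subtractf)
  also have "\<dots> = (\<Sum>j<k. (1 - z) * (\<Sum>i<j. z ^ i))"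
    by (simp add: one_diff_power_eq)
  finally show ?thesis
    by (simp add: geom_defect_def sum_distrib_left)
qed

lemma geom_defect_primitive_has_real_derivative:
  "(geom_defect_primitive k has_real_derivative geom_defect k x) (at x within S)"
proof -
  have "((\<lambda>x. x ^ Suc i / real (Suc i)) has_real_derivative x ^ i) (at x within S)" for i
    using DERIV_cdivide[OF DERIV_pow[of "Suc i"], of "real (Suc i)"]
    by (simp del: of_nat_Suc)
  then show ?thesis
    unfolding geom_defect_primitive_def geom_defect_def by (intro DERIV_sum)
qed

lemma has_integral_geom_defect:
  assumes "0 \<le> x"
  shows "(geom_defect k has_integral geom_defect_primitive k x) {0..x}"
proof -
  have "(geom_defect k has_integral geom_defect_primitive k x - geom_defect_primitive k 0) {0..x}"
    using assms geom_defect_primitive_has_real_derivative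
    by (intro fundamental_theorem_of_calculus)
       (auto simp: has_real_derivative_iff_has_vector_derivative[symmetric])
  then show ?thesis
    by (simp add: geom_defect_primitive_def)
qed

lemma geom_defect_primitive_nonneg: "0 \<le> x \<Longrightarrow> 0 \<le> geom_defect_primitive k x"
  unfolding geom_defect_primitive_def by (intro sum_nonneg) auto

lemma geom_defect_primitive_le_one:
  "0 \<le> x \<Longrightarrow> x \<le> 1 \<Longrightarrow> geom_defect_primitive k x \<le> geom_defect_primitive k 1"
  unfolding geom_defect_primitive_def
  by (intro sum_mono divide_right_mono) (auto intro: power_le_one mult_le_one)

lemma geom_defect_primitive_one: "geom_defect_primitive k 1 = real k * (harm k - 1)"
proof (induction k)
  case (Suc k)
  have "geom_defect_primitive (Suc k) 1 = geom_defect_primitive k 1 + harm k"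
    by (simp add: geom_defect_primitive_def harm_altdef field_simps)
  also have "\<dots> = real k * (harm k - 1) + harm k"
    using Suc by simp
  also have "\<dots> = real (Suc k) * (harm (Suc k) - 1)"
    by (simp add: harm_Suc field_simps)
  finally show ?case .
qed (simp add: geom_defect_primitive_def)

lemma geom_defect_primitive_one_bounds:
  "real k * ln (real k) - real k \<le> geom_defect_primitive k 1"
  "geom_defect_primitive k 1 \<le> real k * ln (real k)"
proof -
  have "real k * (harm k - 1) \<le> real k * ln (real k) \<and> real k * ln (real k) \<le> real k * harm k"
  proof (cases "k = 0")
    case False
    then have "harm k - 1 \<le> ln (real k)" "ln (real k) \<le> harm k"
      using euler_mascheroni_sequence_decreasing[of 1 k] euler_mascheroni_sequence_nonneg[of k]
      by (simp_all add: harm_def)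
    then show ?thesis
      by (simp add: mult_left_mono)
  qed simp
  then show "real k * ln (real k) - real k \<le> geom_defect_primitive k 1"
    "geom_defect_primitive k 1 \<le> real k * ln (real k)"
    by (simp_all add: geom_defect_primitive_one algebra_simps)
qed

lemma summable_geom_defect_primitive_one_iff:
  fixes p :: "nat \<Rightarrow> real"
  assumes nonneg: "\<And>k. 0 \<le> p k" and mean: "summable (\<lambda>k. real k * p k)"
  shows "summable (\<lambda>k. p k * geom_defect_primitive k 1) \<longleftrightarrow>
         summable (\<lambda>k. p k * real k * ln (real k))"
proof
  assume "summable (\<lambda>k. p k * geom_defect_primitive k 1)"
  then have "summable (\<lambda>k. p k * geom_defect_primitive k 1 + real k * p k)"
    using mean by (rule summable_add)
  then show "summable (\<lambda>k. p k * real k * ln (real k))"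
  proof (rule summable_comparison_test[rotated], intro exI allI impI)
    fix k
    have "p k * (real k * ln (real k) - real k) \<le> p k * geom_defect_primitive k 1"
      using geom_defect_primitive_one_bounds(1) nonneg by (intro mult_left_mono)
    moreover have "0 \<le> p k * real k * ln (real k)"
      using nonneg[of k] by (cases "k = 0") auto
    ultimately show "norm (p k * real k * ln (real k)) \<le> p k * geom_defect_primitive k 1 + real k * p k"
      by (simp add: algebra_simps)
  qed
next
  assume "summable (\<lambda>k. p k * real k * ln (real k))"
  then show "summable (\<lambda>k. p k * geom_defect_primitive k 1)"
  proof (rule summable_comparison_test[rotated], intro exI allI impI)
    fix k
    have "p k * geom_defect_primitive k 1 \<le> p k * (real k * ln (real k))"
      using geom_defect_primitive_one_bounds(2) nonneg by (intro mult_left_mono)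
    then show "norm (p k * geom_defect_primitive k 1) \<le> p k * real k * ln (real k)"
      using nonneg[of k] geom_defect_primitive_nonneg[of 1 k] by (simp add: mult.assoc)
  qed
qed

lemma tendsto_exp_uminus_0_iff:
  fixes f :: "'a \<Rightarrow> real"
  shows "((\<lambda>x. exp (- f x)) \<longlongrightarrow> 0) F \<longleftrightarrow> filterlim f at_top F"
proof
  assume "((\<lambda>x. exp (- f x)) \<longlongrightarrow> 0) F"
  then have "filterlim (\<lambda>x. exp (- f x)) (at_right 0) F"
    by (auto intro: tendsto_imp_filterlim_at_right)
  from filterlim_compose[OF ln_at_0 this] show "filterlim f at_top F"
    by (simp add: filterlim_uminus_at_bot)
next
  assume "filterlim f at_top F"
  then have "filterlim (\<lambda>x. - f x) at_bot F"
    by (simp add: filterlim_uminus_at_bot)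
  from filterlim_compose[OF exp_at_bot this] show "((\<lambda>x. exp (- f x)) \<longlongrightarrow> 0) F" .
qed

definition kappa_integrand :: "(nat \<Rightarrow> real) \<Rightarrow> real \<Rightarrow> real" where
  "kappa_integrand p z = mean1 p / (1 - pgf p z) - 1 / (1 - z)"

definition pgf_slope :: "(nat \<Rightarrow> real) \<Rightarrow> real \<Rightarrow> real" where
  "pgf_slope p z = (1 - pgf p z) / (1 - z)"

definition pgf_slope_gap :: "(nat \<Rightarrow> real) \<Rightarrow> real \<Rightarrow> real" where
  "pgf_slope_gap p z = (mean1 p - pgf_slope p z) / (1 - z)"

context
  fixes p :: "nat \<Rightarrow> real"
  assumes p0: "p 0 = 0"
    and nonneg: "\<And>k. p k \<ge> 0"
    and sum1: "p sums 1"
    and finite_mean: "summable (\<lambda>k. real k * p k)"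
begin

lemma mean1_sums: "(\<lambda>k. real k * p k) sums mean1 p"
  unfolding mean1_def using finite_mean by (rule summable_sums)

lemma pgf_sums:
  assumes "0 \<le> z" "z \<le> 1"
  shows "(\<lambda>k. p k * z ^ k) sums pgf p z"
proof -
  have "summable (\<lambda>k. p k * z ^ k)"
  proof (rule summable_comparison_test[OF _ sums_summable[OF sum1]], intro exI allI impI)
    fix k
    have "p k * z ^ k \<le> p k"
      using nonneg[of k] assms by (simp add: mult_left_le power_le_one)
    then show "norm (p k * z ^ k) \<le> p k"
      using nonneg[of k] assms by simp
  qed
  then show ?thesis
    unfolding pgf_def by (rule summable_sums)
qed

lemma isCont_pgf:
  assumes "\<bar>z\<bar> < 1"
  shows "isCont (pgf p) z"
proof -
  have "isCont (\<lambda>z. \<Sum>k. p k * z ^ k) z"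
    using assms sums_summable[OF sum1] by (intro isCont_powser[where K = 1]) auto
  then show ?thesis
    by (simp add: pgf_def[abs_def])
qed

lemma pgf_slope_sums:
  assumes "0 \<le> z" "z < 1"
  shows "(\<lambda>k. p k * (\<Sum>j<k. z ^ j)) sums pgf_slope p z"
proof -
  have "(\<lambda>k. p k - p k * z ^ k) sums (1 - pgf p z)"
    using sums_diff[OF sum1 pgf_sums[of z]] assms by simp
  moreover have "p k - p k * z ^ k = (1 - z) * (p k * (\<Sum>j<k. z ^ j))" for k
    by (metis one_diff_power_eq mult.left_commute right_diff_distrib mult_1_right)
  ultimately have "(\<lambda>k. (1 - z) * (p k * (\<Sum>j<k. z ^ j))) sums (1 - pgf p z)"
    by simp
  from sums_mult[OF this, of "1 / (1 - z)"] assms show ?thesis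
    by (simp add: pgf_slope_def)
qed

lemma pgf_slope_bounds:
  assumes "0 \<le> z" "z < 1"
  shows "1 \<le> pgf_slope p z" "pgf_slope p z \<le> mean1 p"
proof -
  show "1 \<le> pgf_slope p z"
  proof (rule sums_le[OF _ sum1 pgf_slope_sums[OF assms]])
    fix k
    have "1 \<le> (\<Sum>j<k. z ^ j)" if "k > 0"
      using member_le_sum[of 0 "{..<k}" "\<lambda>j. z ^ j"] that assms by auto
    then show "p k \<le> p k * (\<Sum>j<k. z ^ j)"
      using p0 nonneg[of k] by (cases "k = 0") (auto intro: mult_left_le_one_le simp: mult_le_cancel_left1)
  qed
  show "pgf_slope p z \<le> mean1 p"
  proof (rule sums_le[OF _ pgf_slope_sums[OF assms] mean1_sums])
    fix k
    have "(\<Sum>j<k. z ^ j) \<le> real k"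
      using sum_mono[of "{..<k}" "\<lambda>j. z ^ j" "\<lambda>_. 1"] assms by (simp add: power_le_one)
    then have "p k * (\<Sum>j<k. z ^ j) \<le> p k * real k"
      using nonneg[of k] by (rule mult_left_mono)
    then show "p k * (\<Sum>j<k. z ^ j) \<le> real k * p k"
      by (simp add: mult.commute)
  qed
qed

lemma pgf_slope_gap_sums:
  assumes "0 \<le> z" "z < 1"
  shows "(\<lambda>k. p k * geom_defect k z) sums pgf_slope_gap p z"
proof -
  have "real k * p k - p k * (\<Sum>j<k. z ^ j) = (1 - z) * (p k * geom_defect k z)" for k
    by (metis geom_defect_eq mult.commute mult.left_commute right_diff_distrib)
  then have "(\<lambda>k. (1 - z) * (p k * geom_defect k z)) sums (mean1 p - pgf_slope p z)"
    using sums_diff[OF mean1_sums pgf_slope_sums[OF assms]] by simp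
  from sums_mult[OF this, of "1 / (1 - z)"] assms show ?thesis
    by (simp add: pgf_slope_gap_def)
qed

lemma pgf_slope_gap_nonneg: "0 \<le> z \<Longrightarrow> z < 1 \<Longrightarrow> 0 \<le> pgf_slope_gap p z"
  using sums_le[OF _ sums_zero pgf_slope_gap_sums] nonneg geom_defect_nonneg by simp

lemma partial_sum_le_pgf_slope_gap:
  assumes "0 \<le> z" "z < 1"
  shows "(\<Sum>k<N. p k * geom_defect k z) \<le> pgf_slope_gap p z"
  using sum_le_suminf[OF sums_summable[OF pgf_slope_gap_sums[OF assms]]]
    sums_unique[OF pgf_slope_gap_sums[OF assms]] nonneg geom_defect_nonneg assms
  by simp

lemma kappa_integrand_bounds:
  assumes "0 \<le> z" "z < 1"
  shows "pgf_slope_gap p z / mean1 p \<le> kappa_integrand p z"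
    and "kappa_integrand p z \<le> pgf_slope_gap p z"
proof -
  note slope = pgf_slope_bounds[OF assms]
  have gap: "0 \<le> pgf_slope_gap p z"
    using pgf_slope_gap_nonneg assms .
  have "kappa_integrand p z = mean1 p / ((1 - z) * pgf_slope p z) - 1 / (1 - z)"
    using assms by (simp add: kappa_integrand_def pgf_slope_def)
  also have "1 / (1 - z) = pgf_slope p z / ((1 - z) * pgf_slope p z)"
    using slope by simp
  also have "mean1 p / ((1 - z) * pgf_slope p z) - \<dots> =
      (mean1 p - pgf_slope p z) / ((1 - z) * pgf_slope p z)"
    by (rule diff_divide_distrib[symmetric])
  finally have eq: "kappa_integrand p z = pgf_slope_gap p z / pgf_slope p z"
    by (simp add: pgf_slope_gap_def)
  show "pgf_slope_gap p z / mean1 p \<le> kappa_integrand p z"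
    unfolding eq using slope gap by (intro divide_left_mono) auto
  show "kappa_integrand p z \<le> pgf_slope_gap p z"
    unfolding eq using slope gap by (simp add: divide_le_eq mult_le_cancel_left1)
qed

lemma continuous_on_pgf_slope_gap:
  assumes "x < 1"
  shows "continuous_on {0..x} (pgf_slope_gap p)"
  using assms
  by (intro continuous_at_imp_continuous_on ballI)
     (auto simp: pgf_slope_gap_def[abs_def] pgf_slope_def intro!: continuous_intros isCont_pgf)

lemma continuous_on_kappa_integrand:
  assumes "x < 1"
  shows "continuous_on {0..x} (kappa_integrand p)"
proof (intro continuous_at_imp_continuous_on ballI)
  fix z assume z: "z \<in> {0..x}"
  then have "1 - pgf p z = (1 - z) * pgf_slope p z" "1 \<le> pgf_slope p z"
    using assms pgf_slope_bounds[of z] by (auto simp: pgf_slope_def)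
  then have "pgf p z \<noteq> 1"
    using z assms by auto
  then show "isCont (kappa_integrand p) z"
    using z assms by (auto simp: kappa_integrand_def[abs_def] intro!: continuous_intros isCont_pgf)
qed

lemma sums_integral_pgf_slope_gap:
  assumes "0 \<le> x" "x < 1"
  shows "(\<lambda>k. p k * geom_defect_primitive k x) sums integral {0..x} (pgf_slope_gap p)"
proof -
  define S where "S = {0..x}"
  define f where "f N z = (\<Sum>k<N. p k * geom_defect k z)" for N z
  have f_has_integral: "(f N has_integral (\<Sum>k<N. p k * geom_defect_primitive k x)) S" for N
    unfolding S_def f_def using assms has_integral_geom_defect
    by (intro has_integral_sum has_integral_mult_right) auto
  then have f_integral: "integral S (f N) = (\<Sum>k<N. p k * geom_defect_primitive k x)"
    and f_integrable: "f N integrable_on S" for N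
    by (blast intro: integral_unique)+
  have gap_integrable: "pgf_slope_gap p integrable_on S"
    unfolding S_def using assms(2) by (intro integrable_continuous_interval continuous_on_pgf_slope_gap)
  have "bounded (range (\<lambda>N. integral S (f N)))"
  proof -
    have "\<bar>integral S (f N)\<bar> \<le> integral S (pgf_slope_gap p)" for N
    proof -
      have "0 \<le> integral S (f N)"
        unfolding f_integral using assms nonneg
        by (intro sum_nonneg mult_nonneg_nonneg geom_defect_primitive_nonneg) auto
      moreover have "integral S (f N) \<le> integral S (pgf_slope_gap p)"
        using f_integrable gap_integrable partial_sum_le_pgf_slope_gap assms
        by (intro integral_le) (auto simp: S_def f_def)
      ultimately show ?thesis by simp
    qed
    then show ?thesis
      unfolding bounded_real by auto
  qed
  moreover have "(\<lambda>N. f N z) \<longlonglongrightarrow> pgf_slope_gap p z" if "z \<in> S" for z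
    using pgf_slope_gap_sums[of z] that assms by (simp add: S_def f_def sums_def)
  ultimately have "(\<lambda>N. integral S (f N)) \<longlonglongrightarrow> integral S (pgf_slope_gap p)"
    using f_integrable nonneg geom_defect_nonneg assms
    by (intro monotone_convergence_increasing[THEN conjunct2]) (auto simp: S_def f_def)
  then show ?thesis
    unfolding f_integral unfolding sums_def S_def .
qed

lemma integral_kappa_integrand_bounds:
  assumes "0 \<le> x" "x < 1"
  shows "integral {0..x} (pgf_slope_gap p) / mean1 p \<le> integral {0..x} (kappa_integrand p)"
    and "integral {0..x} (kappa_integrand p) \<le> integral {0..x} (pgf_slope_gap p)"
proof -
  have gap: "(pgf_slope_gap p has_integral integral {0..x} (pgf_slope_gap p)) {0..x}"
    using assms(2) by (intro integrable_integral integrable_continuous_interval continuous_on_pgf_slope_gap)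
  have kappa: "(kappa_integrand p has_integral integral {0..x} (kappa_integrand p)) {0..x}"
    using assms(2) by (intro integrable_integral integrable_continuous_interval continuous_on_kappa_integrand)
  show "integral {0..x} (pgf_slope_gap p) / mean1 p \<le> integral {0..x} (kappa_integrand p)"
    by (rule has_integral_le[OF has_integral_divide[OF gap] kappa])
       (use kappa_integrand_bounds(1) assms in auto)
  show "integral {0..x} (kappa_integrand p) \<le> integral {0..x} (pgf_slope_gap p)"
    by (rule has_integral_le[OF kappa gap]) (use kappa_integrand_bounds(2) assms in auto)
qed

lemma filterlim_integral_kappa_integrand_iff:
  "filterlim (\<lambda>q. integral {0..1 - q} (kappa_integrand p)) at_top (at_right 0) \<longleftrightarrow>
   \<not> summable (\<lambda>k. p k * geom_defect_primitive k 1)"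
proof
  assume lim: "filterlim (\<lambda>q. integral {0..1 - q} (kappa_integrand p)) at_top (at_right 0)"
  show "\<not> summable (\<lambda>k. p k * geom_defect_primitive k 1)"
  proof
    assume "summable (\<lambda>k. p k * geom_defect_primitive k 1)"
    then have B: "(\<lambda>k. p k * geom_defect_primitive k 1) sums (\<Sum>k. p k * geom_defect_primitive k 1)"
      by (rule summable_sums)
    have "eventually (\<lambda>q. (\<Sum>k. p k * geom_defect_primitive k 1) < integral {0..1 - q} (kappa_integrand p)
        \<and> q \<in> {0<..<1}) (at_right 0)"
      using lim by (intro eventually_conj eventually_at_right_real) (auto simp: filterlim_at_top_dense)
    then have "eventually (\<lambda>_. False) (at_right (0::real))"
    proof (rule eventually_mono, elim conjE)
      fix q :: real
      assume q: "q \<in> {0<..<1}"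
        and less: "(\<Sum>k. p k * geom_defect_primitive k 1) < integral {0..1 - q} (kappa_integrand p)"
      have "integral {0..1 - q} (kappa_integrand p) \<le> integral {0..1 - q} (pgf_slope_gap p)"
        using q by (intro integral_kappa_integrand_bounds) auto
      also have "\<dots> \<le> (\<Sum>k. p k * geom_defect_primitive k 1)"
        using q nonneg by (intro sums_le[OF _ sums_integral_pgf_slope_gap B] mult_left_mono
            geom_defect_primitive_le_one) auto
      finally show False
        using less by simp
    qed
    then show False
      by simp
  qed
next
  assume not_summable: "\<not> summable (\<lambda>k. p k * geom_defect_primitive k 1)"
  have mean1_pos: "0 < mean1 p"
    using pgf_slope_bounds[of 0] by simp
  show "filterlim (\<lambda>q. integral {0..1 - q} (kappa_integrand p)) at_top (at_right 0)"
    unfolding filterlim_at_top_dense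
  proof
    fix M :: real
    obtain N where N: "M * mean1 p < (\<Sum>k<N. p k * geom_defect_primitive k 1)"
    proof (rule ccontr)
      assume "\<not> thesis"
      then have "(\<Sum>k\<le>n. p k * geom_defect_primitive k 1) \<le> M * mean1 p" for n
        using that[of "Suc n"] by (force simp: lessThan_Suc_atMost)
      then have "summable (\<lambda>k. p k * geom_defect_primitive k 1)"
        using nonneg geom_defect_primitive_nonneg[of 1] by (intro bounded_imp_summable) auto
      with not_summable show False ..
    qed
    have "((\<lambda>q. \<Sum>k<N. p k * geom_defect_primitive k (1 - q)) \<longlongrightarrow>
        (\<Sum>k<N. p k * geom_defect_primitive k (1 - 0))) (at_right 0)"
      unfolding geom_defect_primitive_def by (intro tendsto_intros) auto
    then have "eventually (\<lambda>q. M * mean1 p < (\<Sum>k<N. p k * geom_defect_primitive k (1 - q))) (at_right 0)"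
      using N by (intro order_tendstoD(1)) auto
    moreover have "eventually (\<lambda>q. q \<in> {0<..<1}) (at_right (0::real))"
      by (rule eventually_at_right_real) simp
    ultimately show "eventually (\<lambda>q. M < integral {0..1 - q} (kappa_integrand p)) (at_right 0)"
    proof eventually_elim
      case (elim q)
      have "M * mean1 p < (\<Sum>k<N. p k * geom_defect_primitive k (1 - q))"
        by (fact elim(1))
      also have "\<dots> \<le> integral {0..1 - q} (pgf_slope_gap p)"
        using elim(2) sums_integral_pgf_slope_gap[of "1 - q"] nonneg geom_defect_primitive_nonneg
        by (intro sum_le_suminf[THEN order_trans, OF sums_summable] ) (auto simp: sums_iff)
      also have "\<dots> \<le> mean1 p * integral {0..1 - q} (kappa_integrand p)"
        using integral_kappa_integrand_bounds(1)[of "1 - q"] elim(2) mean1_pos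
        by (simp add: divide_le_eq mult.commute)
      finally show ?case
        using mean1_pos by (simp add: mult.commute)
    qed
  qed
qed

end

theorem lemma3p7:
  fixes p :: "nat \<Rightarrow> real"
  assumes p0: "p 0 = 0"
    and nonneg: "\<And>k. p k \<ge> 0"
    and sum1: "p sums 1"
    and finite_mean: "summable (\<lambda>k. real k * p k)"
  shows "((kappa p) \<longlongrightarrow> 0) (at_right 0) \<longleftrightarrow>
         \<not> summable (\<lambda>k. p k * real k * ln (real k))"
proof -
  have "kappa p = (\<lambda>q. exp (- integral {0..1 - q} (kappa_integrand p)))"
    by (simp add: kappa_def[abs_def] kappa_integrand_def[abs_def])
  then have "((kappa p) \<longlongrightarrow> 0) (at_right 0) \<longleftrightarrow>
      filterlim (\<lambda>q. integral {0..1 - q} (kappa_integrand p)) at_top (at_right 0)"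
    by (simp add: tendsto_exp_uminus_0_iff)
  also have "\<dots> \<longleftrightarrow> \<not> summable (\<lambda>k. p k * geom_defect_primitive k 1)"
    using assms by (rule filterlim_integral_kappa_integrand_iff)
  also have "\<dots> \<longleftrightarrow> \<not> summable (\<lambda>k. p k * real k * ln (real k))"
    using nonneg finite_mean by (simp add: summable_geom_defect_primitive_one_iff)
  finally show ?thesis .
qed

end
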